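(* Let $k,c,\epsilon>0$ be constants and let $p=\frac{1+\epsilon}{d}$. Then with high probability every subset $X\subseteq V(Q^d)$ of size $|X|\ge c\, n d^{-k}$ satisfies $|\partial_{e,p}(X)|\le |X|\log d$.
   Context: $Q^d$ denotes the $d$-dimensional hypercube: vertex set $\{0,1\}^d$, two vertices adjacent iff they differ in exactly one coordinate; $n:=2^d$. $Q^d_p$ denotes the random subgraph of $Q^d$ on the same vertex set obtained by retaining each edge of $Q^d$ independently with probability $p$. For $X\subseteq V(Q^d)$, $\partial_{e,p}(X)$ is the set of edges of $Q^d_p$ with one endpoint in $X$ and the other in $V(Q^d)\setminus X$. "With high probability" means with probability tending to one as $d\to\infty$. *)

theory Defs
  imports "HOL-Probability.Probability"
begin

text \<open>Vertices of Q^d: subsets of {0..<d} (identified with 0/1 vectors of length d).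
  Edges: unordered pairs {u,v} of vertices differing in exactly one coordinate.\<close>

definition cube_vertices :: "nat \<Rightarrow> nat set set" where
  "cube_vertices d = Pow {..<d}"

definition cube_edges :: "nat \<Rightarrow> nat set set set" where
  "cube_edges d = {{u, v} | u v. u \<in> cube_vertices d \<and> v \<in> cube_vertices d
                                 \<and> card (sym_diff u v) = 1}"

text \<open>Distribution of Q^d_p: each edge retained independently with probability p;
  a sample is the indicator function of retained edges (False outside the edge set).\<close>

definition random_cube :: "nat \<Rightarrow> real \<Rightarrow> (nat set set \<Rightarrow> bool) pmf" where
  "random_cube d p = Pi_pmf (cube_edges d) False (\<lambda>_. bernoulli_pmf p)"

definition edge_boundary :: "nat \<Rightarrow> (nat set set \<Rightarrow> bool) \<Rightarrow> nat set set \<Rightarrow> nat set set set" where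
  "edge_boundary d G X = {e \<in> cube_edges d. G e \<and> (\<exists>u\<in>e. u \<in> X) \<and> (\<exists>v\<in>e. v \<notin> X)}"

end

theory Submission
  imports Defs "HOL-Real_Asymp.Real_Asymp"
begin

text \<open>Union bound over all large X. If more than |X| ln d edges of the boundary of X survive, then
  some fixed set of m = \<lceil>|X| ln d\<rceil> edges of the full boundary (of size at most |X| d) survives,
  which has probability at most C(|X| d, m) p^m \<le> (e(1+\<epsilon>)/ln d)^m \<le> q^|X| with q = (e(1+\<epsilon>)/ln d)^(ln d).
  There are at most C(2^d, s) \<le> (e d^k/c)^s sets of size s \<ge> c 2^d d^-k, so the failure probability
  is at most \<Sum>s (e d^k q/c)^s; this tends to 0 because (ln d)^(ln d) grows faster than any power of d.
  The argument works for every real k.\<close>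

lemma power_le_exp_mult_fact:
  fixes x :: real
  assumes "0 \<le> x"
  shows "x ^ n \<le> exp x * fact n"
proof -
  have "summable (\<lambda>i. x ^ i /\<^sub>R fact i)" and exp_eq: "exp x = (\<Sum>i. x ^ i /\<^sub>R fact i)"
    using exp_converges[of x] by (auto simp: sums_iff)
  then have "(\<Sum>i\<in>{n}. x ^ i /\<^sub>R fact i) \<le> (\<Sum>i. x ^ i /\<^sub>R fact i)"
    by (intro sum_le_suminf) (use assms in auto)
  then show ?thesis
    unfolding exp_eq[symmetric] by (simp add: field_simps)
qed

lemma binomial_mult_power_le:
  fixes p :: real
  assumes "0 \<le> p" and "m > 0"
  shows "real (N choose m) * p ^ m \<le> (exp 1 * real N * p / real m) ^ m"
proof -
  have choose_fact: "real (N choose m) * fact m \<le> real N ^ m"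
    using binomial_fact_pow[of N m] by (metis of_nat_fact of_nat_le_iff of_nat_mult of_nat_power)
  have "real m ^ m \<le> exp 1 ^ m * fact m"
    using power_le_exp_mult_fact[of "real m" m] by (simp add: exp_of_nat_mult[symmetric])
  then have "real (N choose m) * p ^ m * real m ^ m \<le> real (N choose m) * p ^ m * (exp 1 ^ m * fact m)"
    using assms(1) by (intro mult_left_mono) auto
  also have "\<dots> = (exp 1 * p) ^ m * (real (N choose m) * fact m)"
    by (simp add: power_mult_distrib)
  also have "\<dots> \<le> (exp 1 * p) ^ m * real N ^ m"
    using assms(1) choose_fact by (intro mult_left_mono) auto
  finally show ?thesis
    using assms(2) by (simp add: power_divide power_mult_distrib pos_le_divide_eq mult_ac)
qed

corollary binomial_le_exp_power:
  assumes "k > 0"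
  shows "real (n choose k) \<le> (exp 1 * real n / real k) ^ k"
  using binomial_mult_power_le[of 1 k n] assms by simp

lemma sum_power_le_twice:
  fixes r :: real
  assumes "0 \<le> r" and "r \<le> 1/2"
  shows "(\<Sum>s=1..n. r ^ s) \<le> 2 * r"
proof -
  have "(\<Sum>s=1..n. r ^ s) = r * (\<Sum>i<n. r ^ i)"
    by (simp add: sum_distrib_left sum.atLeast1_atMost_eq power_Suc)
  also have "\<dots> = r * ((1 - r ^ n) / (1 - r))"
    using assms by (simp add: sum_gp_strict)
  also have "\<dots> \<le> r * (1 / (1 - r))"
    using assms by (intro mult_left_mono divide_right_mono) auto
  also have "\<dots> \<le> r * 2"
    using assms by (intro mult_left_mono) (auto simp: field_simps)
  finally show ?thesis
    by simp
qed

lemma finite_cube_vertices: "finite (cube_vertices d)"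
  by (simp add: cube_vertices_def)

lemma card_cube_vertices: "card (cube_vertices d) = 2 ^ d"
  by (simp add: cube_vertices_def card_Pow)

lemma finite_cube_edges: "finite (cube_edges d)"
proof -
  have "cube_edges d \<subseteq> Pow (cube_vertices d)"
    unfolding cube_edges_def by auto
  then show ?thesis
    using finite_cube_vertices by (meson finite_Pow_iff finite_subset)
qed

lemma card_cube_edges_at_le:
  assumes "u \<in> cube_vertices d"
  shows "card {e \<in> cube_edges d. u \<in> e} \<le> d"
proof -
  have "{e \<in> cube_edges d. u \<in> e} \<subseteq> (\<lambda>i. {u, sym_diff u {i}}) ` {..<d}"
  proof
    fix e assume e: "e \<in> {e \<in> cube_edges d. u \<in> e}"
    then obtain a b where ab: "e = {a, b}" "a \<in> cube_vertices d" "b \<in> cube_vertices d"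
      "card (sym_diff a b) = 1" unfolding cube_edges_def by auto
    then obtain i where i: "sym_diff a b = {i}"
      by (meson card_1_singletonE)
    then have "i < d"
      using ab(2,3) unfolding cube_vertices_def by auto
    moreover have "b = sym_diff a {i}" and "a = sym_diff b {i}"
      using i by blast+
    moreover have "u = a \<or> u = b"
      using e ab(1) by auto
    ultimately show "e \<in> (\<lambda>i. {u, sym_diff u {i}}) ` {..<d}"
      using ab(1) by (auto intro: image_eqI[of _ _ i])
  qed
  then have "card {e \<in> cube_edges d. u \<in> e} \<le> card ((\<lambda>i. {u, sym_diff u {i}}) ` {..<d})"
    by (intro card_mono) auto
  also have "\<dots> \<le> d"
    using card_image_le[of "{..<d}"] by simp
  finally show ?thesis .
qed

lemma edge_boundary_eq_retained:
  "edge_boundary d G X = {e \<in> edge_boundary d (\<lambda>_. True) X. G e}"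
  by (auto simp: edge_boundary_def)

lemma edge_boundary_subset_cube_edges: "edge_boundary d G X \<subseteq> cube_edges d"
  by (auto simp: edge_boundary_def)

lemma card_edge_boundary_le:
  assumes "X \<subseteq> cube_vertices d"
  shows "card (edge_boundary d G X) \<le> card X * d"
proof -
  have fin_X: "finite X"
    using assms finite_cube_vertices by (rule finite_subset)
  have "edge_boundary d G X \<subseteq> (\<Union>u\<in>X. {e \<in> cube_edges d. u \<in> e})"
    unfolding edge_boundary_def by auto
  then have "card (edge_boundary d G X) \<le> card (\<Union>u\<in>X. {e \<in> cube_edges d. u \<in> e})"
    by (intro card_mono) (auto intro: finite_subset[OF _ finite_cube_edges] simp: fin_X)
  also have "\<dots> \<le> (\<Sum>u\<in>X. card {e \<in> cube_edges d. u \<in> e})"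
    by (rule card_UN_le[OF fin_X])
  also have "\<dots> \<le> (\<Sum>u\<in>X. d)"
    by (intro sum_mono card_cube_edges_at_le) (use assms in auto)
  finally show ?thesis
    by simp
qed

lemma prob_random_cube_all_retained:
  assumes "F \<subseteq> cube_edges d" and "0 \<le> p" and "p \<le> 1"
  shows "measure_pmf.prob (random_cube d p) {G. \<forall>e\<in>F. G e} = p ^ card F"
proof -
  have "{G. \<forall>e\<in>F. G e} = Pi (cube_edges d) (\<lambda>e. if e \<in> F then {True} else UNIV)"
    using assms(1) by (auto simp: Pi_def)
  then have "measure_pmf.prob (random_cube d p) {G. \<forall>e\<in>F. G e}
      = (\<Prod>e\<in>cube_edges d. measure_pmf.prob (bernoulli_pmf p) (if e \<in> F then {True} else UNIV))"
    unfolding random_cube_def by (simp add: measure_Pi_pmf_Pi[OF finite_cube_edges])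
  also have "\<dots> = (\<Prod>e\<in>cube_edges d. if e \<in> F then p else 1)"
    by (intro prod.cong refl) (use assms in \<open>auto simp: measure_pmf_single\<close>)
  also have "\<dots> = p ^ card F"
    using prod.If_cases[OF finite_cube_edges, of "\<lambda>e. e \<in> F" "\<lambda>_. p" "\<lambda>_. 1"] assms(1)
    by (simp add: Int_absorb1)
  finally show ?thesis .
qed

lemma prob_at_least_retained_le:
  assumes "B \<subseteq> cube_edges d" and "0 \<le> p" and "p \<le> 1"
  shows "measure_pmf.prob (random_cube d p) {G. m \<le> card {e \<in> B. G e}}
           \<le> real (card B choose m) * p ^ m"
proof -
  define FF where "FF = {F. F \<subseteq> B \<and> card F = m}"
  have fin_B: "finite B"
    using assms(1) finite_cube_edges by (rule finite_subset)
  have fin_FF: "finite FF"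
    unfolding FF_def using fin_B by (auto intro: finite_subset[of _ "Pow B"])
  have "{G. m \<le> card {e \<in> B. G e}} \<subseteq> (\<Union>F\<in>FF. {G. \<forall>e\<in>F. G e})"
  proof
    fix G assume "G \<in> {G. m \<le> card {e \<in> B. G e}}"
    then obtain F where "F \<subseteq> {e \<in> B. G e}" and "card F = m"
      by (auto elim: obtain_subset_with_card_n)
    then show "G \<in> (\<Union>F\<in>FF. {G. \<forall>e\<in>F. G e})"
      unfolding FF_def by auto
  qed
  then have "measure_pmf.prob (random_cube d p) {G. m \<le> card {e \<in> B. G e}}
      \<le> measure_pmf.prob (random_cube d p) (\<Union>F\<in>FF. {G. \<forall>e\<in>F. G e})"
    by (rule measure_pmf.finite_measure_mono) simp
  also have "\<dots> \<le> (\<Sum>F\<in>FF. measure_pmf.prob (random_cube d p) {G. \<forall>e\<in>F. G e})"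
    by (rule measure_pmf.finite_measure_subadditive_finite) (auto simp: fin_FF)
  also have "\<dots> = (\<Sum>F\<in>FF. p ^ m)"
    using assms by (intro sum.cong refl) (auto simp: FF_def prob_random_cube_all_retained)
  also have "\<dots> = real (card B choose m) * p ^ m"
    using n_subsets[OF fin_B, of m] by (simp add: FF_def)
  finally show ?thesis .
qed

lemma prob_edge_boundary_large_le:
  fixes p L :: real
  assumes X: "X \<subseteq> cube_vertices d" "X \<noteq> {}"
    and p: "0 \<le> p" "p \<le> 1" and L: "0 < L" "exp 1 * real d * p \<le> L"
  shows "measure_pmf.prob (random_cube d p)
           {G. real (card X) * L < real (card (edge_boundary d G X))}
         \<le> ((exp 1 * real d * p / L) powr L) ^ card X"
proof -
  define s where "s = card X"
  define q where "q = exp 1 * real d * p / L"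
  define B where "B = edge_boundary d (\<lambda>_. True) X"
  define m where "m = nat \<lceil>real s * L\<rceil>"
  have "finite X"
    using X(1) finite_cube_vertices by (rule finite_subset)
  then have "s > 0"
    using X(2) by (simp add: s_def card_gt_0_iff)
  have m_ge: "real s * L \<le> real m"
    unfolding m_def by linarith
  then have "m > 0"
    using \<open>s > 0\<close> L(1) by (metis not_gr0 not_le of_nat_0 of_nat_0_less_iff mult_pos_pos)
  have q: "0 \<le> q" "q \<le> 1"
    using p L by (auto simp: q_def)
  have "{G. real s * L < real (card (edge_boundary d G X))} \<subseteq> {G. m \<le> card {e \<in> B. G e}}"
    unfolding m_def B_def by (auto simp: edge_boundary_eq_retained[symmetric])
  then have "measure_pmf.prob (random_cube d p) {G. real s * L < real (card (edge_boundary d G X))}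
      \<le> measure_pmf.prob (random_cube d p) {G. m \<le> card {e \<in> B. G e}}"
    by (rule measure_pmf.finite_measure_mono) simp
  also have "\<dots> \<le> real (card B choose m) * p ^ m"
    using p by (intro prob_at_least_retained_le) (auto simp: B_def edge_boundary_subset_cube_edges)
  also have "\<dots> \<le> (exp 1 * real (card B) * p / real m) ^ m"
    using p \<open>m > 0\<close> by (intro binomial_mult_power_le) auto
  also have "\<dots> \<le> q ^ m"
  proof (intro power_mono)
    have "real (card B) \<le> real s * real d"
      using card_edge_boundary_le[OF X(1)] by (simp add: B_def s_def flip: of_nat_mult)
    then have "exp 1 * real (card B) * p / real m \<le> exp 1 * (real s * real d) * p / (real s * L)"
      using p L \<open>s > 0\<close> m_ge by (intro frac_le mult_right_mono mult_left_mono) auto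
    then show "exp 1 * real (card B) * p / real m \<le> q"
      using \<open>s > 0\<close> by (simp add: q_def)
  qed (use p in auto)
  also have "\<dots> = q powr real m"
    using q \<open>m > 0\<close> by (simp add: powr_realpow')
  also have "\<dots> \<le> q powr (L * real s)"
    using q m_ge by (intro powr_mono') (auto simp: mult.commute)
  also have "\<dots> = (q powr L) ^ s"
    using q \<open>s > 0\<close> by (simp add: powr_powr[symmetric] powr_realpow')
  finally show ?thesis
    by (simp add: s_def q_def)
qed

lemma prob_exists_large_edge_boundary_le:
  fixes p L t :: real
  assumes p: "0 \<le> p" "p \<le> 1" and L: "0 < L" "exp 1 * real d * p \<le> L" and "0 < t"
  defines "r \<equiv> exp 1 * 2 ^ d / t * (exp 1 * real d * p / L) powr L"
  shows "measure_pmf.prob (random_cube d p)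
           {G. \<exists>X. X \<subseteq> cube_vertices d \<and> t \<le> real (card X)
                 \<and> real (card X) * L < real (card (edge_boundary d G X))}
         \<le> (\<Sum>s=1..2^d. r ^ s)"
proof -
  define M where "M = random_cube d p"
  define y where "y = (exp 1 * real d * p / L) powr L"
  define S where "S = {s \<in> {1..2^d}. t \<le> real s}"
  define subsets where "subsets s = {X. X \<subseteq> cube_vertices d \<and> card X = s}" for s
  define large where "large X = {G. real (card X) * L < real (card (edge_boundary d G X))}" for X
  have fin_subsets: "finite (subsets s)" for s
    unfolding subsets_def using finite_cube_vertices by (auto intro: finite_subset[of _ "Pow _"])
  have y: "0 \<le> y"
    by (simp add: y_def)
  have "{G. \<exists>X. X \<subseteq> cube_vertices d \<and> t \<le> real (card X)
                 \<and> real (card X) * L < real (card (edge_boundary d G X))}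
        \<subseteq> (\<Union>s\<in>S. \<Union>X\<in>subsets s. large X)"
  proof safe
    fix G X assume X: "X \<subseteq> cube_vertices d" "t \<le> real (card X)"
      and "real (card X) * L < real (card (edge_boundary d G X))"
    moreover have "card X \<le> 2 ^ d"
      using card_mono[OF finite_cube_vertices X(1)] by (simp add: card_cube_vertices)
    ultimately have "card X \<in> S" and "X \<in> subsets (card X)" and "G \<in> large X"
      using \<open>0 < t\<close> by (auto simp: S_def subsets_def large_def)
    then show "G \<in> (\<Union>s\<in>S. \<Union>X\<in>subsets s. large X)"
      by blast
  qed
  then have "measure M {G. \<exists>X. X \<subseteq> cube_vertices d \<and> t \<le> real (card X)
                 \<and> real (card X) * L < real (card (edge_boundary d G X))}
      \<le> measure M (\<Union>s\<in>S. \<Union>X\<in>subsets s. large X)"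
    by (rule measure_pmf.finite_measure_mono) simp
  also have "\<dots> \<le> (\<Sum>s\<in>S. measure M (\<Union>X\<in>subsets s. large X))"
    by (rule measure_pmf.finite_measure_subadditive_finite) (auto simp: S_def)
  also have "\<dots> \<le> (\<Sum>s\<in>S. \<Sum>X\<in>subsets s. measure M (large X))"
    by (intro sum_mono measure_pmf.finite_measure_subadditive_finite) (auto simp: fin_subsets)
  also have "\<dots> \<le> (\<Sum>s\<in>S. \<Sum>X\<in>subsets s. y ^ s)"
  proof (intro sum_mono)
    fix s X assume "s \<in> S" and "X \<in> subsets s"
    then have "X \<subseteq> cube_vertices d" "X \<noteq> {}" "card X = s"
      by (auto simp: S_def subsets_def)
    then show "measure M (large X) \<le> y ^ s"
      unfolding M_def large_def y_def using p L by (metis prob_edge_boundary_large_le)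
  qed
  also have "\<dots> = (\<Sum>s\<in>S. real (2 ^ d choose s) * y ^ s)"
    using n_subsets[OF finite_cube_vertices] by (simp add: subsets_def card_cube_vertices)
  also have "\<dots> \<le> (\<Sum>s\<in>S. r ^ s)"
  proof (intro sum_mono)
    fix s assume "s \<in> S"
    then have s: "0 < s" "t \<le> real s"
      by (auto simp: S_def)
    have "real (2 ^ d choose s) * y ^ s \<le> (exp 1 * 2 ^ d / real s) ^ s * y ^ s"
      using binomial_le_exp_power[OF s(1), of "2 ^ d"] y by (intro mult_right_mono) auto
    also have "\<dots> = (exp 1 * 2 ^ d / real s * y) ^ s"
      by (simp only: power_mult_distrib)
    also have "\<dots> \<le> r ^ s"
      unfolding r_def y_def[symmetric] using s \<open>0 < t\<close> y
      by (intro power_mono mult_right_mono divide_left_mono mult_pos_pos) auto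
    finally show "real (2 ^ d choose s) * y ^ s \<le> r ^ s" .
  qed
  also have "\<dots> \<le> (\<Sum>s=1..2^d. r ^ s)"
    using \<open>0 < t\<close> by (intro sum_mono2) (auto simp: S_def r_def)
  finally show ?thesis
    unfolding M_def .
qed

lemma prob_small_edge_boundaries_ge:
  fixes c k \<epsilon> :: real
  assumes "0 < c" and "0 < \<epsilon>" and "1 + \<epsilon> \<le> real d" and "exp 1 * (1 + \<epsilon>) \<le> ln (real d)"
  defines "r \<equiv> exp 1 / c * real d powr k * exp (ln (real d) * (1 + ln (1 + \<epsilon>) - ln (ln (real d))))"
  assumes "r \<le> 1/2"
  shows "1 - 2 * r \<le> measure_pmf.prob (random_cube d ((1 + \<epsilon>) / real d))
            {G. \<forall>X. X \<subseteq> cube_vertices d \<and> real (card X) \<ge> c * 2 ^ d * real d powr (- k)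
                 \<longrightarrow> real (card (edge_boundary d G X)) \<le> real (card X) * ln (real d)}"
proof -
  define p where "p = (1 + \<epsilon>) / real d"
  define L where "L = ln (real d)"
  define t where "t = c * 2 ^ d * real d powr (- k)"
  define bad where "bad = {G. \<exists>X. X \<subseteq> cube_vertices d \<and> t \<le> real (card X)
                 \<and> real (card X) * L < real (card (edge_boundary d G X))}"
  have d: "0 < real d" and L: "0 < L"
    using assms(2-4) exp_gt_zero[of 1] by (auto simp: L_def intro: order.strict_trans2 mult_pos_pos)
  have p: "0 \<le> p" "p \<le> 1" "exp 1 * real d * p = exp 1 * (1 + \<epsilon>)"
    using assms(2,3) d by (auto simp: p_def)
  have "0 < t"
    using assms(1) d by (simp add: t_def)
  have "exp 1 * 2 ^ d / t = exp 1 / c * real d powr k"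
    using assms(1) d by (simp add: t_def powr_minus field_simps)
  moreover have "(exp 1 * (1 + \<epsilon>) / L) powr L = exp (L * (1 + ln (1 + \<epsilon>) - ln L))"
    using assms(2) L by (simp add: powr_def ln_div ln_mult)
  ultimately have r_eq: "exp 1 * 2 ^ d / t * (exp 1 * real d * p / L) powr L = r"
    by (simp add: r_def p(3) L_def)
  have "measure_pmf.prob (random_cube d p) bad
      \<le> (\<Sum>s=1..2^d. (exp 1 * 2 ^ d / t * (exp 1 * real d * p / L) powr L) ^ s)"
    unfolding bad_def
    by (intro prob_exists_large_edge_boundary_le p(1,2) L \<open>0 < t\<close>) (unfold L_def p(3), fact)
  then have "measure_pmf.prob (random_cube d p) bad \<le> (\<Sum>s=1..2^d. r ^ s)"
    unfolding r_eq .
  also have "\<dots> \<le> 2 * r"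
    using assms(1,6) by (intro sum_power_le_twice) (auto simp: r_def)
  finally have "1 - 2 * r \<le> 1 - measure_pmf.prob (random_cube d p) bad"
    by simp
  also have "\<dots> = measure_pmf.prob (random_cube d p) (UNIV - bad)"
    using measure_pmf.prob_compl[of bad] by simp
  also have "UNIV - bad = {G. \<forall>X. X \<subseteq> cube_vertices d \<and> real (card X) \<ge> t
                 \<longrightarrow> real (card (edge_boundary d G X)) \<le> real (card X) * L}"
    unfolding bad_def by auto
  finally show ?thesis
    unfolding p_def t_def L_def .
qed

theorem lemma2p5:
  fixes k c \<epsilon> :: real
  assumes "k > 0" and "c > 0" and "\<epsilon> > 0"
  shows "(\<lambda>d::nat. measure_pmf.prob (random_cube d ((1 + \<epsilon>) / real d))
            {G. \<forall>X. X \<subseteq> cube_vertices d \<and> real (card X) \<ge> c * 2 ^ d * real d powr (- k)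
                 \<longrightarrow> real (card (edge_boundary d G X)) \<le> real (card X) * ln (real d)})
         \<longlonglongrightarrow> 1"
    (is "?P \<longlonglongrightarrow> 1")
proof -
  define r where "r x = exp 1 / c * x powr k * exp (ln x * (1 + ln (1 + \<epsilon>) - ln (ln x)))" for x :: real
  have r_lim: "(r \<longlongrightarrow> 0) at_top"
    unfolding r_def by real_asymp
  have "\<forall>\<^sub>F x in at_top. r x \<le> 1/2"
    using order_tendstoD(2)[OF r_lim, of "1/2"] by (auto elim: eventually_mono)
  moreover have "\<forall>\<^sub>F x in at_top. 1 + \<epsilon> \<le> x \<and> exp 1 * (1 + \<epsilon>) \<le> ln x"
    by (intro eventually_conj; real_asymp)
  ultimately have "\<forall>\<^sub>F x in at_top. r x \<le> 1/2 \<and> 1 + \<epsilon> \<le> x \<and> exp 1 * (1 + \<epsilon>) \<le> ln x"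
    by (rule eventually_conj)
  then have "\<forall>\<^sub>F d in sequentially. r (real d) \<le> 1/2 \<and> 1 + \<epsilon> \<le> real d \<and> exp 1 * (1 + \<epsilon>) \<le> ln (real d)"
    using filterlim_real_sequentially by (rule eventually_compose_filterlim)
  then have "\<forall>\<^sub>F d in sequentially. 1 - 2 * r (real d) \<le> ?P d"
    unfolding r_def by eventually_elim (rule prob_small_edge_boundaries_ge, use assms in auto)
  moreover have "\<forall>\<^sub>F d in sequentially. ?P d \<le> 1"
    by simp
  moreover have "(\<lambda>d. 1 - 2 * r (real d)) \<longlonglongrightarrow> 1"
    using filterlim_compose[OF r_lim filterlim_real_sequentially] by (auto intro!: tendsto_eq_intros)
  ultimately show ?thesis
    by (rule tendsto_sandwich[OF _ _ _ tendsto_const])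
qed

end
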